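(* For every environment $\omega$, $n=l+m$, $x=-l+m$ with $l,m\ge0$, $$P^{\omega}_n(X_n=x)=P^{\mathbf 0}_n(X_n=x)+\tfrac12\{p^{(H)}_n(l,m)^2-q^{(H)}_n(l,m)^2\}\sin(\omega_0),$$ where $P^{\mathbf 0}_n$ denotes the quenched law for the environment $\omega\equiv0$.
   Context: $U_x=\frac{1}{\sqrt2}\begin{pmatrix} e^{i\omega_x} & 1\\ 1 & -e^{-i\omega_x}\end{pmatrix}=\begin{pmatrix} a_x & b_x\\ c_x & d_x\end{pmatrix}$ ($\omega_x\in\mathbb R$), $P_x=\begin{pmatrix} a_x & b_x\\ 0&0\end{pmatrix}$, $Q_x=\begin{pmatrix} 0&0\\ c_x & d_x\end{pmatrix}$. $\Xi_0(0,0)=I$, $\Xi_n(l,m)=0$ if $l<0$ or $m<0$, and $\Xi_{n+1}(l,m)=P_{x+1}\Xi_n(l-1,m)+Q_{x-1}\Xi_n(l,m-1)$ for $l,m\ge0$, $l+m=n+1$, $x=-l+m$. With $\varphi_*={}^T[1/\sqrt2,i/\sqrt2]$, $P^{\omega}_n(X_n=x)=\|\Xi_n(l,m)\varphi_*\|^2$. Here, for $\min\{l,m\}\ge1$, $p^{(H)}_n(l,m)=(1/\sqrt2)^{n-1}\sum_{\gamma=1}^{(l-1)\wedge m}(-1)^{m-\gamma}\binom{l-1}{\gamma}\binom{m-1}{\gamma-1}$ and $q^{(H)}_n(l,m)=(1/\sqrt2)^{n-1}\sum_{\gamma=1}^{l\wedge(m-1)}(-1)^{m-\gamma-1}\binom{l-1}{\gamma-1}\binom{m-1}{\gamma}$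 (empty sums are $0$); $p^{(H)}_n(0,n)=0$, $q^{(H)}_n(0,n)=(-1/\sqrt2)^{n-1}$, $p^{(H)}_n(n,0)=(1/\sqrt2)^{n-1}$, $q^{(H)}_n(n,0)=0$ for $n\ge1$, and $p^{(H)}_0(0,0)=q^{(H)}_0(0,0)=0$. *)

theory Defs
  imports "HOL-Analysis.Analysis"
begin

type_synonym cmat2 = "complex ^ 2 ^ 2"

definition coin_a :: "(int \<Rightarrow> real) \<Rightarrow> int \<Rightarrow> complex" where
  "coin_a \<omega> x = exp (\<i> * complex_of_real (\<omega> x)) / complex_of_real (sqrt 2)"
definition coin_b :: "(int \<Rightarrow> real) \<Rightarrow> int \<Rightarrow> complex" where
  "coin_b \<omega> x = 1 / complex_of_real (sqrt 2)"
definition coin_c :: "(int \<Rightarrow> real) \<Rightarrow> int \<Rightarrow> complex" where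
  "coin_c \<omega> x = 1 / complex_of_real (sqrt 2)"
definition coin_d :: "(int \<Rightarrow> real) \<Rightarrow> int \<Rightarrow> complex" where
  "coin_d \<omega> x = - exp (- \<i> * complex_of_real (\<omega> x)) / complex_of_real (sqrt 2)"

definition coinU :: "(int \<Rightarrow> real) \<Rightarrow> int \<Rightarrow> cmat2" where
  "coinU \<omega> x = (\<chi> i j. if i = 1 then (if j = 1 then coin_a \<omega> x else coin_b \<omega> x)
                           else (if j = 1 then coin_c \<omega> x else coin_d \<omega> x))"

definition matP :: "(int \<Rightarrow> real) \<Rightarrow> int \<Rightarrow> cmat2" where
  "matP \<omega> x = (\<chi> i j. if i = 1 then coinU \<omega> x $ i $ j else 0)"

definition matQ :: "(int \<Rightarrow> real) \<Rightarrow> int \<Rightarrow> cmat2" where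
  "matQ \<omega> x = (\<chi> i j. if i = 2 then coinU \<omega> x $ i $ j else 0)"

fun Xi :: "(int \<Rightarrow> real) \<Rightarrow> nat \<Rightarrow> int \<Rightarrow> int \<Rightarrow> cmat2" where
  "Xi \<omega> 0 l m = (if l = 0 \<and> m = 0 then mat 1 else 0)"
| "Xi \<omega> (Suc n) l m =
     (if l < 0 \<or> m < 0 then 0
      else matP \<omega> (- l + m + 1) ** Xi \<omega> n (l - 1) m
         + matQ \<omega> (- l + m - 1) ** Xi \<omega> n l (m - 1))"

definition phi0 :: "complex ^ 2" where
  "phi0 = (\<chi> i. if i = 1 then 1 / complex_of_real (sqrt 2) else \<i> / complex_of_real (sqrt 2))"

(* quenched probability P^omega_n(X_n = x) = || Xi_n(l,m) phi ||^2 with n = l+m, x = -l+m;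
   zero when n + x is odd (position unreachable) *)
definition qprob :: "(int \<Rightarrow> real) \<Rightarrow> nat \<Rightarrow> int \<Rightarrow> real" where
  "qprob \<omega> n x = (if even (int n + x)
      then (norm (Xi \<omega> n ((int n - x) div 2) ((int n + x) div 2) *v phi0))^2 else 0)"

definition pH :: "nat \<Rightarrow> nat \<Rightarrow> nat \<Rightarrow> real" where
  "pH n l m =
    (if 1 \<le> l \<and> 1 \<le> m then
       (1 / sqrt 2) ^ (n - 1) *
       (\<Sum>\<gamma> = 1..min (l - 1) m. (-1) ^ (m - \<gamma>) * real ((l - 1) choose \<gamma>) * real ((m - 1) choose (\<gamma> - 1)))
     else if l = 0 \<and> m = n \<and> 1 \<le> n then 0
     else if l = n \<and> m = 0 \<and> 1 \<le> n then (1 / sqrt 2) ^ (n - 1)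
     else 0)"

definition qH :: "nat \<Rightarrow> nat \<Rightarrow> nat \<Rightarrow> real" where
  "qH n l m =
    (if 1 \<le> l \<and> 1 \<le> m then
       (1 / sqrt 2) ^ (n - 1) *
       (\<Sum>\<gamma> = 1..min l (m - 1). (-1) ^ (m - \<gamma> - 1) * real ((l - 1) choose (\<gamma> - 1)) * real ((m - 1) choose \<gamma>))
     else if l = 0 \<and> m = n \<and> 1 \<le> n then (- 1 / sqrt 2) ^ (n - 1)
     else if l = n \<and> m = 0 \<and> 1 \<le> n then 0
     else 0)"

end

theory Submission
  imports Defs
begin

(* The quenched amplitude Xi_n(l,m) of the walk in a general environment
   omega is gauge equivalent to the amplitude of the homogeneous (Hadamard) walk:
     Xi^omega_n(l,m) = L(x) Xi^0_n(l,m) R(omega_0),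
   where L(x) is a diagonal unitary built from the discrete antiderivative of omega and
   R(theta) = diag(e^{i theta}, 1).  Since L(x) preserves norms, P^omega_n(X_n = x) is the
   squared norm of the real matrix Xi^0_n(l,m) applied to R(omega_0) phi_*, and a direct
   computation shows that such a squared norm equals a phase-independent part plus
   (alpha beta + gamma delta) sin(omega_0), with (alpha, beta; gamma, delta) = Xi^0_n(l,m).
   Finally Xi^0_n(l,m) is computed in closed form: it is (1/sqrt 2)^n times
   (p+r, p-r; q+r, r-q) for three binomial sums p, q, r obeying Pascal-type recurrences,
   so alpha beta + gamma delta = (1/2)^n (p^2 - q^2), and p, q are exactly the
   sums occurring in p^(H) and q^(H). *)


section \<open>Two-by-two complex matrices in coordinates\<close>

definition mat2 :: "complex \<Rightarrow> complex \<Rightarrow> complex \<Rightarrow> complex \<Rightarrow> cmat2" where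
  "mat2 a b c d = (\<chi> i j. if i = 1 then (if j = 1 then a else b) else (if j = 1 then c else d))"

lemma mat2_mult:
  "mat2 a b c d ** mat2 a' b' c' d' = mat2 (a*a'+b*c') (a*b'+b*d') (c*a'+d*c') (c*b'+d*d')"
  unfolding mat2_def matrix_matrix_mult_def vec_eq_iff forall_2 by (simp add: sum_2)

lemma mat2_add: "mat2 a b c d + mat2 a' b' c' d' = mat2 (a+a') (b+b') (c+c') (d+d')"
  unfolding mat2_def vec_eq_iff forall_2 by simp

lemma mat2_zero: "(0::cmat2) = mat2 0 0 0 0"
  unfolding mat2_def vec_eq_iff forall_2 by simp

lemma mat2_one: "(mat 1::cmat2) = mat2 1 0 0 1"
  unfolding mat2_def mat_def vec_eq_iff forall_2 by simp

lemma mat2_mult_vec: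
  "mat2 a b c d *v v = (\<chi> i. if i = 1 then a * v$1 + b * v$2 else c * v$1 + d * v$2)"
  unfolding mat2_def matrix_vector_mult_def vec_eq_iff forall_2 by (simp add: sum_2)

lemma norm_vec2_sq: "(norm (v::complex^2))^2 = (cmod (v$1))^2 + (cmod (v$2))^2"
  unfolding norm_vec_def L2_set_def by (simp add: sum_2)

text \<open>Right distributivity of the matrix product (the library only has the left one).\<close>
lemma matrix_add_rdistrib: "((A::'a::semiring_1^'n^'m) + B) ** C = A ** C + B ** C"
  by (vector matrix_matrix_mult_def sum.distrib[symmetric] distrib_right)

lemma matP_mat2: "matP \<omega> x = mat2 (cis (\<omega> x) / sqrt 2) (1 / sqrt 2) 0 0"
  unfolding matP_def coinU_def mat2_def coin_a_def coin_b_def vec_eq_iff forall_2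
  by (simp add: cis_conv_exp mult.commute)

lemma matQ_mat2: "matQ \<omega> x = mat2 0 0 (1 / sqrt 2) (- cis (- \<omega> x) / sqrt 2)"
  unfolding matQ_def coinU_def mat2_def coin_c_def coin_d_def vec_eq_iff forall_2
  by (simp add: cis_conv_exp mult.commute)


section \<open>Gauge transformation to the homogeneous walk\<close>

definition potential :: "(int \<Rightarrow> real) \<Rightarrow> int \<Rightarrow> real" where
  "potential \<omega> x = (if x \<ge> 0 then (\<Sum>k<nat x. \<omega> (int k))
                    else - (\<Sum>k\<in>{1..nat (-x)}. \<omega> (- int k)))"

lemma potential_zero: "potential \<omega> 0 = 0"
  by (simp add: potential_def)

lemma potential_succ: "potential \<omega> (x + 1) = potential \<omega> x + \<omega> x"
proof (cases "x \<ge> 0")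
  case True
  then have "nat (x + 1) = Suc (nat x)" by simp
  with True show ?thesis by (simp add: potential_def)
next
  case False
  show ?thesis
  proof (cases "x = -1")
    case True
    then show ?thesis by (simp add: potential_def)
  next
    case not_minus_one: False
    define j where "j = nat (-x) - 1"
    have j: "nat (-x) = Suc j" "j \<ge> 1" "nat (-(x+1)) = j" "x = - int (Suc j)"
      using False not_minus_one unfolding j_def by auto
    with False show ?thesis by (simp add: potential_def)
  qed
qed

text \<open>The diagonal unitaries conjugating the walk in environment omega to the homogeneous one:
  a site-dependent one acting on the left, and a constant one acting on the right.\<close>
definition gauge_left :: "(int \<Rightarrow> real) \<Rightarrow> int \<Rightarrow> cmat2" where
  "gauge_left \<omega> x = mat2 (cis (- potential \<omega> x - \<omega> x)) 0 0 (cis (- potential \<omega> x))"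

definition gauge_right :: "real \<Rightarrow> cmat2" where
  "gauge_right \<theta> = mat2 (cis \<theta>) 0 0 1"

lemma matP_gauge: "matP \<omega> (x + 1) ** gauge_left \<omega> (x + 1) = gauge_left \<omega> x ** matP (\<lambda>_. 0) y"
proof -
  have "cis (- \<omega> x - potential \<omega> x) = cis (- potential \<omega> x - \<omega> x)"
    by (rule arg_cong[where f=cis]) simp
  then show ?thesis
    unfolding matP_mat2 gauge_left_def mat2_mult potential_succ
    by (simp add: cis_mult algebra_simps)
qed

lemma matQ_gauge: "matQ \<omega> (x - 1) ** gauge_left \<omega> (x - 1) = gauge_left \<omega> x ** matQ (\<lambda>_. 0) y"
proof -
  have "cis (- potential \<omega> (x-1) - \<omega> (x-1)) = cis (- \<omega> (x-1) - potential \<omega> (x-1))"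
    by (rule arg_cong[where f=cis]) simp
  moreover have "potential \<omega> x = potential \<omega> (x-1) + \<omega> (x-1)"
    using potential_succ[of \<omega> "x-1"] by simp
  ultimately show ?thesis
    unfolding matQ_mat2 gauge_left_def mat2_mult
    by (simp add: cis_mult algebra_simps)
qed

lemma Xi_gauge:
  "Xi \<omega> n l m = gauge_left \<omega> (-l+m) ** Xi (\<lambda>_. 0) n l m ** gauge_right (\<omega> 0)"
proof (induction n arbitrary: l m)
  case 0
  show ?case
    by (simp add: gauge_left_def gauge_right_def mat2_one mat2_mult potential_zero cis_mult)
next
  case (Suc n)
  show ?case
  proof (cases "l < 0 \<or> m < 0")
    case True
    then show ?thesis by simp
  next
    case False
    have site_left: "- (l - 1) + m = (-l+m) + 1" and site_right: "- l + (m - 1) = (-l+m) - 1"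
      by simp_all
    have "Xi \<omega> (Suc n) l m = matP \<omega> (-l+m+1) ** Xi \<omega> n (l-1) m
         + matQ \<omega> (-l+m-1) ** Xi \<omega> n l (m-1)"
      using False by simp
    also have "\<dots> = (matP \<omega> (-l+m+1) ** gauge_left \<omega> (-l+m+1)) ** Xi (\<lambda>_. 0) n (l-1) m
                    ** gauge_right (\<omega> 0)
         + (matQ \<omega> (-l+m-1) ** gauge_left \<omega> (-l+m-1)) ** Xi (\<lambda>_. 0) n l (m-1)
                    ** gauge_right (\<omega> 0)"
      unfolding Suc.IH site_left site_right by (simp add: matrix_mul_assoc)
    also have "\<dots> = gauge_left \<omega> (-l+m) ** (matP (\<lambda>_. 0) (-l+m+1) ** Xi (\<lambda>_. 0) n (l-1) m
         + matQ (\<lambda>_. 0) (-l+m-1) ** Xi (\<lambda>_. 0) n l (m-1)) ** gauge_right (\<omega> 0)"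
      unfolding matP_gauge[where y="-l+m+1"] matQ_gauge[where y="-l+m-1"]
      by (simp add: matrix_mul_assoc matrix_add_ldistrib matrix_add_rdistrib)
    also have "\<dots> = gauge_left \<omega> (-l+m) ** Xi (\<lambda>_. 0) (Suc n) l m ** gauge_right (\<omega> 0)"
      using False by simp
    finally show ?thesis .
  qed
qed

text \<open>The left gauge is diagonal with unimodular entries, hence an isometry.\<close>
lemma norm_gauge_left: "norm (gauge_left \<omega> x *v v) = norm v"
  unfolding gauge_left_def mat2_mult_vec norm_vec_def L2_set_def by (simp add: sum_2 norm_mult)

lemma norm_Xi_phi0:
  "norm (Xi \<omega> n l m *v phi0) = norm (Xi (\<lambda>_. 0) n l m *v (gauge_right (\<omega> 0) *v phi0))"
  unfolding Xi_gauge[of \<omega>] by (simp add: matrix_vector_mul_assoc[symmetric] norm_gauge_left)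


section \<open>The homogeneous (Hadamard) amplitude in closed form\<close>

text \<open>Three alternating binomial sums; in the walk they govern the amplitudes of the
  homogeneous walk away from the boundary of the light cone.\<close>
definition binsum_p :: "nat \<Rightarrow> nat \<Rightarrow> int" where
  "binsum_p L M = (\<Sum>k\<le>L. (-1)^(M+k) * int (L choose (k+1)) * int (M choose k))"

definition binsum_q :: "nat \<Rightarrow> nat \<Rightarrow> int" where
  "binsum_q L M = (\<Sum>k\<le>L. (-1)^(M+k+1) * int (L choose k) * int (M choose (k+1)))"

definition binsum_r :: "nat \<Rightarrow> nat \<Rightarrow> int" where
  "binsum_r L M = (\<Sum>k\<le>L. (-1)^(M+k) * int (L choose k) * int (M choose k))"

lemma sum_atMost_shift_vanishing_top:
  fixes g :: "nat \<Rightarrow> 'a::comm_monoid_add"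
  assumes "g (Suc L) = 0"
  shows "(\<Sum>k\<le>L. g k) = g 0 + (\<Sum>k\<le>L. g (Suc k))"
proof -
  have "(\<Sum>k\<le>L. g k) = (\<Sum>k\<le>Suc L. g k)" using assms by simp
  also have "\<dots> = g 0 + (\<Sum>k\<le>L. g (Suc k))" by (rule sum.atMost_Suc_shift)
  finally show ?thesis .
qed

lemma binsum_p_Suc: "binsum_p (Suc L) M = binsum_p L M + binsum_r L M"
proof -
  have zero: "L choose Suc L = 0" "L choose Suc (Suc L) = 0" by simp_all
  have "binsum_p (Suc L) M = (\<Sum>k\<le>Suc L. (-1)^(M+k) * int (L choose (k+1)) * int (M choose k))
      + (\<Sum>k\<le>Suc L. (-1)^(M+k) * int (L choose k) * int (M choose k))"
    unfolding binsum_p_def by (simp add: zero sum.distrib[symmetric] algebra_simps)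
  also have "\<dots> = binsum_p L M + binsum_r L M"
    unfolding binsum_p_def binsum_r_def by (simp add: zero)
  finally show ?thesis .
qed

lemma binsum_p_0: "binsum_p 0 M = 0"
  unfolding binsum_p_def by simp

lemma binsum_r_shifted:
  "binsum_r L M = (-1)^M + (\<Sum>k\<le>L. (-1)^(M+k+1) * int (L choose (k+1)) * int (M choose (k+1)))"
  unfolding binsum_r_def by (subst sum_atMost_shift_vanishing_top) simp_all

lemma binsum_r_Suc: "binsum_r (Suc L) M = binsum_q L M + binsum_r L M"
proof -
  have "binsum_r (Suc L) M
      = (-1)^M + (\<Sum>k\<le>L. (-1)^(M+k+1) * int (Suc L choose (k+1)) * int (M choose (k+1)))"
    unfolding binsum_r_def by (subst sum.atMost_Suc_shift) simp
  also have "\<dots> = (-1)^M + (\<Sum>k\<le>L. (-1)^(M+k+1) * int (L choose (k+1)) * int (M choose (k+1)))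
       + (\<Sum>k\<le>L. (-1)^(M+k+1) * int (L choose k) * int (M choose (k+1)))"
    by (simp add: sum.distrib[symmetric] algebra_simps)
  also have "\<dots> = binsum_q L M + binsum_r L M"
    unfolding binsum_r_shifted binsum_q_def by simp
  finally show ?thesis .
qed

lemma binsum_r_0: "binsum_r 0 M = (-1)^M"
  unfolding binsum_r_def by simp

lemma binsum_q_Suc: "binsum_q L (Suc M) = binsum_r L M - binsum_q L M"
  unfolding binsum_q_def binsum_r_def
  by (simp add: sum.distrib[symmetric] sum_subtractf[symmetric] algebra_simps)

lemma binsum_q_0: "binsum_q L 0 = 0"
  unfolding binsum_q_def by simp

lemma binsum_r_Suc_right: "binsum_r L (Suc M) = binsum_p L M - binsum_r L M"
proof -
  have pascal: "Suc M choose k = (if k = 0 then 0 else M choose (k - 1)) + (M choose k)" for k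
    by (cases k) simp_all
  have "binsum_r L (Suc M)
      = (\<Sum>k\<le>L. (-1)^(M+k+1) * int (L choose k) * int (if k = 0 then 0 else M choose (k - 1)))
        - binsum_r L M"
    unfolding binsum_r_def
    by (simp add: pascal sum.distrib[symmetric] sum_subtractf[symmetric] algebra_simps)
       (rule sum.cong[OF refl], linarith)
  also have "(\<Sum>k\<le>L. (-1)^(M+k+1) * int (L choose k) * int (if k = 0 then 0 else M choose (k - 1)))
      = binsum_p L M"
    unfolding binsum_p_def by (subst sum_atMost_shift_vanishing_top) simp_all
  finally show ?thesis .
qed

lemma binsum_r_0_right: "binsum_r L 0 = 1"
  unfolding binsum_r_def by (subst sum_atMost_shift_vanishing_top) simp_all

definition amp_p :: "nat \<Rightarrow> nat \<Rightarrow> int" where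
  "amp_p l m = (if 1 \<le> l \<and> 1 \<le> m then binsum_p (l-1) (m-1) else if m = 0 \<and> 1 \<le> l then 1 else 0)"

definition amp_q :: "nat \<Rightarrow> nat \<Rightarrow> int" where
  "amp_q l m = (if 1 \<le> l \<and> 1 \<le> m then binsum_q (l-1) (m-1)
                else if l = 0 \<and> 1 \<le> m then (-1)^(m-1) else 0)"

definition amp_r :: "nat \<Rightarrow> nat \<Rightarrow> int" where
  "amp_r l m = (if 1 \<le> l \<and> 1 \<le> m then binsum_r (l-1) (m-1) else 0)"

text \<open>The recurrences of the binomial sums extend across the edges of the light cone.\<close>
lemma amp_p_rec: "1 \<le> l \<Longrightarrow> 1 \<le> m \<Longrightarrow> amp_p l m = amp_p (l-1) m + amp_r (l-1) m"
  by (cases l; cases m; cases "l - 1") (auto simp: amp_p_def amp_r_def binsum_p_Suc binsum_p_0)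

lemma amp_r_rec_left: "1 \<le> l \<Longrightarrow> 1 \<le> m \<Longrightarrow> amp_r l m = amp_q (l-1) m + amp_r (l-1) m"
  by (cases l; cases m; cases "l - 1") (auto simp: amp_q_def amp_r_def binsum_r_Suc binsum_r_0)

lemma amp_q_rec: "1 \<le> l \<Longrightarrow> 1 \<le> m \<Longrightarrow> amp_q l m = amp_r l (m-1) - amp_q l (m-1)"
  by (cases l; cases m; cases "m - 1") (auto simp: amp_q_def amp_r_def binsum_q_Suc binsum_q_0)

lemma amp_r_rec_right: "1 \<le> l \<Longrightarrow> 1 \<le> m \<Longrightarrow> amp_r l m = amp_p l (m-1) - amp_r l (m-1)"
  by (cases l; cases m; cases "m - 1")
     (auto simp: amp_p_def amp_r_def binsum_r_Suc_right binsum_r_0_right)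

text \<open>The candidate closed form of the homogeneous amplitude Xi^0_n(l,m).\<close>
definition hadamard_amp :: "nat \<Rightarrow> nat \<Rightarrow> nat \<Rightarrow> cmat2" where
  "hadamard_amp n l m = (let s = (1 / complex_of_real (sqrt 2))^n in
     mat2 (s * of_int (amp_p l m + amp_r l m)) (s * of_int (amp_p l m - amp_r l m))
          (s * of_int (amp_q l m + amp_r l m)) (s * of_int (amp_r l m - amp_q l m)))"

lemma matP_homogeneous:
  "matP (\<lambda>_. 0) x = mat2 (1 / complex_of_real (sqrt 2)) (1 / complex_of_real (sqrt 2)) 0 0"
  by (simp add: matP_mat2)

lemma matQ_homogeneous:
  "matQ (\<lambda>_. 0) x = mat2 0 0 (1 / complex_of_real (sqrt 2)) (- 1 / complex_of_real (sqrt 2))"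
  by (simp add: matQ_mat2)


lemma hadamard_amp_step:
  assumes "1 \<le> l" "1 \<le> m"
  shows "hadamard_amp (Suc n) l m = matP (\<lambda>_. 0) 0 ** hadamard_amp n (l-1) m
                                  + matQ (\<lambda>_. 0) 0 ** hadamard_amp n l (m-1)"
proof -
  have rec: "amp_p l m + amp_r l m = (amp_p (l-1) m + amp_r (l-1) m) + (amp_q (l-1) m + amp_r (l-1) m)"
    "amp_p l m - amp_r l m = (amp_p (l-1) m - amp_r (l-1) m) + (amp_r (l-1) m - amp_q (l-1) m)"
    "amp_q l m + amp_r l m = (amp_p l (m-1) + amp_r l (m-1)) - (amp_q l (m-1) + amp_r l (m-1))"
    "amp_r l m - amp_q l m = (amp_p l (m-1) - amp_r l (m-1)) - (amp_r l (m-1) - amp_q l (m-1))"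
    using amp_p_rec[OF assms] amp_r_rec_left[OF assms] amp_q_rec[OF assms] amp_r_rec_right[OF assms]
    by simp_all
  show ?thesis
    unfolding hadamard_amp_def Let_def matP_homogeneous matQ_homogeneous mat2_mult mat2_add rec
    by (simp only: of_int_add of_int_diff power_Suc mult_zero_left add_0 add_0_right) 
       (simp add: algebra_simps diff_divide_distrib add_divide_distrib)
qed


lemma hadamard_amp_step_left_edge:
  "1 \<le> m \<Longrightarrow> hadamard_amp (Suc n) 0 (Suc m) = matQ (\<lambda>_. 0) 0 ** hadamard_amp n 0 m"
  by (cases m) (simp_all add: hadamard_amp_def Let_def amp_p_def amp_q_def amp_r_def
      matQ_homogeneous mat2_mult)

lemma hadamard_amp_step_right_edge:
  "1 \<le> l \<Longrightarrow> hadamard_amp (Suc n) (Suc l) 0 = matP (\<lambda>_. 0) 0 ** hadamard_amp n l 0"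
  by (simp add: hadamard_amp_def Let_def amp_p_def amp_q_def amp_r_def matP_homogeneous mat2_mult)


lemma Xi_outside: "l < 0 \<or> m < 0 \<Longrightarrow> Xi \<omega> n l m = 0"
  by (cases n) auto

text \<open>The homogeneous amplitude agrees with the closed form (for n \<ge> 1; at n = 0 the
  amplitude is the identity, which the closed form does not cover).\<close>
lemma Xi_homogeneous:
  "l + m = Suc n \<Longrightarrow> Xi (\<lambda>_. 0) (Suc n) (int l) (int m) = hadamard_amp (Suc n) l m"
proof (induction n arbitrary: l m)
  case 0
  then have "(l = 1 \<and> m = 0) \<or> (l = 0 \<and> m = 1)" by auto
  then show ?case
    by (auto simp: hadamard_amp_def amp_p_def amp_q_def amp_r_def matP_homogeneous
        matQ_homogeneous mat2_one mat2_zero mat2_mult mat2_add)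
next
  case (Suc n)
  have step: "Xi (\<lambda>_. 0) (Suc (Suc n)) (int l) (int m) =
     matP (\<lambda>_. 0) 0 ** Xi (\<lambda>_. 0) (Suc n) (int l - 1) (int m)
     + matQ (\<lambda>_. 0) 0 ** Xi (\<lambda>_. 0) (Suc n) (int l) (int m - 1)"
    by (simp add: matP_homogeneous matQ_homogeneous)
  consider "l = 0" | "m = 0" | "1 \<le> l" "1 \<le> m" by linarith
  then show ?case
  proof cases
    case 1
    with Suc.prems have "m = Suc (Suc n)" by simp
    with 1 show ?thesis
      using Suc.IH[of 0 "Suc n"] hadamard_amp_step_left_edge[of "Suc n" "Suc n"]
      unfolding step by (simp add: Xi_outside)
  next
    case 2
    with Suc.prems have "l = Suc (Suc n)" by simp
    with 2 show ?thesis
      using Suc.IH[of "Suc n" 0] hadamard_amp_step_right_edge[of "Suc n" "Suc n"]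
      unfolding step by (simp add: Xi_outside)
  next
    case 3
    have "Xi (\<lambda>_. 0) (Suc n) (int l - 1) (int m) = hadamard_amp (Suc n) (l-1) m"
      and "Xi (\<lambda>_. 0) (Suc n) (int l) (int m - 1) = hadamard_amp (Suc n) l (m-1)"
      using Suc.IH[of "l-1" m] Suc.IH[of l "m-1"] Suc.prems 3 by (simp_all add: of_nat_diff)
    with 3 show ?thesis
      unfolding step by (simp add: hadamard_amp_step)
  qed
qed


section \<open>The coefficients p^(H) and q^(H)\<close>

text \<open>The sign (-1)^(M-k) used in p^(H), q^(H) agrees with (-1)^(M+k) used in the sums.\<close>
lemma minus_one_power_diff: "k \<le> M \<Longrightarrow> (-1::real)^(M-k) = (-1)^(M+k)"
proof -
  assume "k \<le> M"
  then have "M + k = (M - k) + 2*k" by simp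
  then have "(-1::real)^(M+k) = (-1)^(M-k) * ((-1)^2)^k" by (simp only: power_add power_mult)
  then show ?thesis by simp
qed

text \<open>The sums in p^(H) and q^(H) are the binomial sums, after shifting the index by one
  and extending the range by vanishing terms.\<close>
lemma pH_sum_eq_binsum_p:
  assumes "1 \<le> l" "1 \<le> m"
  shows "(\<Sum>\<gamma> = 1..min (l - 1) m. (-1) ^ (m - \<gamma>) * real ((l - 1) choose \<gamma>)
            * real ((m - 1) choose (\<gamma> - 1))) = real_of_int (binsum_p (l-1) (m-1))"
proof -
  obtain L M where lm: "l = Suc L" "m = Suc M"
    using assms by (cases l; cases m) simp_all
  let ?f = "\<lambda>\<gamma>. (-1::real) ^ (Suc M - \<gamma>) * real (L choose \<gamma>) * real (M choose (\<gamma> - 1))"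
  have "(\<Sum>\<gamma> = 1..min L (Suc M). ?f \<gamma>) = (\<Sum>\<gamma> = 1..Suc L. ?f \<gamma>)"
    by (rule sum.mono_neutral_left) (auto simp: binomial_eq_0)
  also have "\<dots> = (\<Sum>k = 0..L. ?f (Suc k))"
    using sum.shift_bounds_cl_Suc_ivl[of ?f 0 L] by simp
  also have "\<dots> = (\<Sum>k\<le>L. (-1)^(M+k) * real (L choose (k+1)) * real (M choose k))"
    unfolding atLeast0AtMost
    by (rule sum.cong[OF refl]) (auto simp: minus_one_power_diff binomial_eq_0 not_le)
  finally show ?thesis using lm by (simp add: binsum_p_def)
qed

lemma qH_sum_eq_binsum_q:
  assumes "1 \<le> l" "1 \<le> m"
  shows "(\<Sum>\<gamma> = 1..min l (m - 1). (-1) ^ (m - \<gamma> - 1) * real ((l - 1) choose (\<gamma> - 1))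
            * real ((m - 1) choose \<gamma>)) = real_of_int (binsum_q (l-1) (m-1))"
proof -
  obtain L M where lm: "l = Suc L" "m = Suc M"
    using assms by (cases l; cases m) simp_all
  let ?f = "\<lambda>\<gamma>. (-1::real) ^ (Suc M - \<gamma> - 1) * real (L choose (\<gamma> - 1)) * real (M choose \<gamma>)"
  have "(\<Sum>\<gamma> = 1..min (Suc L) M. ?f \<gamma>) = (\<Sum>\<gamma> = 1..Suc L. ?f \<gamma>)"
    by (rule sum.mono_neutral_left) (auto simp: binomial_eq_0)
  also have "\<dots> = (\<Sum>k = 0..L. ?f (Suc k))"
    using sum.shift_bounds_cl_Suc_ivl[of ?f 0 L] by simp
  also have "\<dots> = (\<Sum>k\<le>L. (-1)^(M+k+1) * real (L choose k) * real (M choose (k+1)))"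
    unfolding atLeast0AtMost
  proof (rule sum.cong[OF refl])
    fix k
    show "?f (Suc k) = (-1)^(M+k+1) * real (L choose k) * real (M choose (k+1))"
    proof (cases "Suc k \<le> M")
      case True
      then have "(-1::real)^(M - Suc k) = (-1)^(M + Suc k)" by (rule minus_one_power_diff)
      then show ?thesis by simp
    qed (simp add: binomial_eq_0)
  qed
  finally show ?thesis using lm by (simp add: binsum_q_def)
qed

lemma pH_eq_amp_p: "n = l + m \<Longrightarrow> pH n l m = (1 / sqrt 2) ^ (n - 1) * real_of_int (amp_p l m)"
  unfolding pH_def amp_p_def using pH_sum_eq_binsum_p[of l m] by auto

lemma qH_eq_amp_q: "n = l + m \<Longrightarrow> qH n l m = (1 / sqrt 2) ^ (n - 1) * real_of_int (amp_q l m)"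
  unfolding qH_def amp_q_def using qH_sum_eq_binsum_q[of l m] by (auto simp: power_minus' power_divide)

lemma power_inverse_sqrt2_sq: "((1 / sqrt 2) ^ k)^2 = (1/2::real)^k"
proof -
  have "((1 / sqrt 2) ^ k)^2 = ((1 / sqrt 2)^2)^k" by (simp only: mult.commute flip: power_mult)
  then show ?thesis by (simp add: power_divide)
qed

lemma pH_sq:
  assumes "n = l + m" "1 \<le> n"
  shows "(pH n l m)^2 = 2 * (1/2)^n * (real_of_int (amp_p l m))^2"
proof -
  obtain k where "n = Suc k" using assms(2) by (cases n) simp_all
  then show ?thesis
    using pH_eq_amp_p[OF assms(1)] by (simp add: power_mult_distrib power_inverse_sqrt2_sq)
qed

lemma qH_sq:
  assumes "n = l + m" "1 \<le> n"
  shows "(qH n l m)^2 = 2 * (1/2)^n * (real_of_int (amp_q l m))^2"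
proof -
  obtain k where "n = Suc k" using assms(2) by (cases n) simp_all
  then show ?thesis
    using qH_eq_amp_q[OF assms(1)] by (simp add: power_mult_distrib power_inverse_sqrt2_sq)
qed


section \<open>Squared norms and the phase at the origin\<close>

lemma cmod_cis_plus_i_sq:
  "(cmod (complex_of_real a * cis \<theta> + complex_of_real b * \<i>))^2 = a^2 + b^2 + 2*a*b * sin \<theta>"
proof -
  have "(cmod (complex_of_real a * cis \<theta> + complex_of_real b * \<i>))^2
      = (a * cos \<theta>)^2 + (a * sin \<theta> + b)^2"
    by (simp add: cmod_power2)
  also have "\<dots> = a^2 * ((cos \<theta>)^2 + (sin \<theta>)^2) + b^2 + 2*a*b * sin \<theta>"
    by algebra
  finally show ?thesis by simp
qed

lemma norm_real_mat2_gauge_phi0: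
  fixes \<alpha> \<beta> \<gamma> \<delta> \<theta> :: real
  shows "(norm (mat2 \<alpha> \<beta> \<gamma> \<delta> *v (gauge_right \<theta> *v phi0)))^2
           = (\<alpha>^2 + \<beta>^2 + \<gamma>^2 + \<delta>^2) / 2 + (\<alpha> * \<beta> + \<gamma> * \<delta>) * sin \<theta>"
proof -
  define v where "v = mat2 \<alpha> \<beta> \<gamma> \<delta> *v (gauge_right \<theta> *v phi0)"
  have "v = (\<chi> i. if i = 1
       then complex_of_real (\<alpha> / sqrt 2) * cis \<theta> + complex_of_real (\<beta> / sqrt 2) * \<i>
       else complex_of_real (\<gamma> / sqrt 2) * cis \<theta> + complex_of_real (\<delta> / sqrt 2) * \<i>)"
    unfolding v_def gauge_right_def mat2_mult_vec phi0_def
    by (simp add: vec_eq_iff forall_2 algebra_simps)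
  then have v1: "v$1 = complex_of_real (\<alpha> / sqrt 2) * cis \<theta> + complex_of_real (\<beta> / sqrt 2) * \<i>"
    and v2: "v$2 = complex_of_real (\<gamma> / sqrt 2) * cis \<theta> + complex_of_real (\<delta> / sqrt 2) * \<i>"
    by simp_all
  have "(norm v)^2
      = (\<alpha> / sqrt 2)^2 + (\<beta> / sqrt 2)^2 + 2 * (\<alpha> / sqrt 2) * (\<beta> / sqrt 2) * sin \<theta>
        + ((\<gamma> / sqrt 2)^2 + (\<delta> / sqrt 2)^2 + 2 * (\<gamma> / sqrt 2) * (\<delta> / sqrt 2) * sin \<theta>)"
    unfolding norm_vec2_sq v1 v2 cmod_cis_plus_i_sq ..
  then show ?thesis
    unfolding v_def by (simp add: power_divide algebra_simps add_divide_distrib)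
qed

lemma norm_hadamard_amp_gauge_phi0:
  "(norm (hadamard_amp n l m *v (gauge_right \<theta> *v phi0)))^2
     = (norm (hadamard_amp n l m *v (gauge_right 0 *v phi0)))^2
       + (1/2)^n * ((real_of_int (amp_p l m))^2 - (real_of_int (amp_q l m))^2) * sin \<theta>"
proof -
  define s where "s = (1 / sqrt 2) ^ n"
  define p q r where "p = real_of_int (amp_p l m)" and "q = real_of_int (amp_q l m)"
    and "r = real_of_int (amp_r l m)"
  have real_form: "hadamard_amp n l m
      = mat2 (of_real (s * (p + r))) (of_real (s * (p - r))) (of_real (s * (q + r))) (of_real (s * (r - q)))"
    unfolding hadamard_amp_def Let_def s_def p_def q_def r_def by (simp add: of_real_power)
  have "s * (p + r) * (s * (p - r)) + s * (q + r) * (s * (r - q)) = s^2 * (p^2 - q^2)"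
    by (simp add: algebra_simps power2_eq_square)
  moreover have "s^2 = (1/2)^n"
    unfolding s_def by (rule power_inverse_sqrt2_sq)
  ultimately show ?thesis
    unfolding real_form norm_real_mat2_gauge_phi0 p_def q_def by simp
qed


lemma qprob_eq_norm_Xi:
  assumes "n = l + m" and "x = - int l + int m"
  shows "qprob \<omega> n x = (norm (Xi \<omega> n (int l) (int m) *v phi0))^2"
proof -
  have "even (int n + x)" "(int n - x) div 2 = int l" "(int n + x) div 2 = int m"
    using assms by simp_all
  then show ?thesis unfolding qprob_def by simp
qed

theorem proposition2:
  fixes \<omega> :: "int \<Rightarrow> real" and l m n :: nat and x :: int
  assumes "n = l + m" and "x = - int l + int m"
  shows "qprob \<omega> n x = qprob (\<lambda>_. 0) n x
           + 1 / 2 * ((pH n l m)^2 - (qH n l m)^2) * sin (\<omega> 0)"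
proof (cases n)
  case 0
  with assms have "l = 0" "m = 0" "x = 0" by auto
  with 0 show ?thesis by (simp add: qprob_def pH_def qH_def)
next
  case (Suc k)
  text \<open>By gauge invariance both probabilities are squared norms of the closed form.\<close>
  have "Xi (\<lambda>_. 0) n (int l) (int m) = hadamard_amp n l m"
    unfolding Suc by (rule Xi_homogeneous) (use assms Suc in simp)
  then have via_closed_form:
    "qprob w n x = (norm (hadamard_amp n l m *v (gauge_right (w 0) *v phi0)))^2" for w
    unfolding qprob_eq_norm_Xi[OF assms] norm_Xi_phi0[of w] by simp
  have "1 \<le> n" using Suc by simp
  show ?thesis
    unfolding via_closed_form norm_hadamard_amp_gauge_phi0[where \<theta> = "\<omega> 0"]
      pH_sq[OF assms(1) \<open>1 \<le> n\<close>] qH_sq[OF assms(1) \<open>1 \<le> n\<close>]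
    by (simp add: algebra_simps)
qed

end
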